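(* Let $A\in\mathbb{R}^{m\times n}$, $b\in\mathbb{R}^m$, $f(x)=\frac12\|Ax-b\|^2$, let $L>0$ be a Lipschitz constant of $\nabla f$, $\lambda>0$, and $H(x)=f(x)+\lambda\|x\|_0$. Let $\{x_k\},\{y_k\}$ be generated by the VMEPIHT method with the choice of $H_k$ and $\alpha_k$ described in the context. Let $x^*$ be any cluster point of $\{x_k\}$ (so $x^*$ is a local minimizer of $H$), let $k_0$ be an index such that $I(y_k)=I(x_k)=I(x^* )$ for all $k\geq k_0$, and assume $\alpha_k>0$ for all $k\geq k_0$. Let $S=\{1,\dots,n\}\setminus I(x^* )$, let $Q$ be the principal submatrix of $A^TA$ indexed by $S$, and for $k\geq k_0$ let $H_k^*$ be the principal submatrix of $H_k$ indexed by $S$ and $d_k^*=-H_k^*(\nabla f(x_k))_S$. Then: (1) $\|x_k-x^*\|^2_{A^TA}$ and $\|y_k-x^*\|^2_{A^TA}$ ($k\ge k_0$) are non-increasing and tend to $0$; moreover, if $\|y_k-x^*\|^2_{A^TA}=0$ for some $k\geq k_0$, then $y_k$ is a local minimizer of $H$; (2) if there are constants $0<m\le M$ with $mI\preceq H_k\preceq MI$ for all $k$, then $\|x_k-x^*\|^2_{A^TA}$ converges to $0$ linearly, i.e. there is $c\in[0,1)$ with $\|x_{k+1}-x^*\|^2_{A^TA}\le c\,\|x_k-x^*\|^2_{A^TA}$ for all $k\ge k_0$; (3) if moreover $Q$ is positive definite and $\lim_{k\to\infty}\frac{\|((H_k^* )^{-1}-Q)d_k^*\|}{\|d_k^*\|}=0$,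 then $\|x_k-x^*\|$ converges to $0$ superlinearly, i.e. $\lim_{k\to\infty}\frac{\|x_{k+1}-x^*\|}{\|x_k-x^*\|}=0$.
   Context: $\|x\|_0$ is the number of nonzero components of $x$; for a symmetric positive semidefinite $B$, $\|v\|_B^2=v^TBv$. For $x\in\mathbb{R}^n$, $I(x):=\{i:x_i=0\}$; for an index set $I$, $C_I:=\{x: x_i=0\ \forall i\in I\}$; $P_C$ is the Euclidean projection onto $C$. For a vector $v$ and index set $S$, $v_S$ is the subvector of entries indexed by $S$. VMEPIHT method: fix $\mu>0$ and a starting point $y_0$. For $k=0,1,2,\dots$: choose $x_k\in\arg\min_x \lambda\|x\|_0+\frac L2\|x-y_k+\frac1L\nabla f(y_k)\|^2+\frac\mu2\|x-y_k\|^2$; then set $y_{k+1}=P_{C_{I(x_k)}}(x_k-\alpha_kH_k\nabla f(x_k))$ with $H_k,\alpha_k$ chosen as follows. Let $S_k=\{1,\dots,n\}\setminus I(x_k)$. $H_k$ is symmetric positive definite and block diagonal with respect to the splitting $S_k$, $I(x_k)$ (i.e. $(H_k)_{ij}=0$ whenever exactly one of $i,j$ lies in $S_k$); let $H_k^k$ be its principal submatrix indexed by $S_k$, $Q^k$ the principal submatrix of $A^TA$ indexed by $S_k$, $g_k=(\nabla f(x_k))_{S_k}$ and $d_k^k=-H_k^kg_k$. If $Q^kd_k^k=0$ set $\alpha_k=0$; otherwise $\alpha_k=\frac{-g_k^Td_k^k}{(d_k^k)^TQ^kd_k^k}$ (exact line search). Thus $y_{k+1}$ equals $x_k+\alpha_kd_k^k$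 on $S_k$ and $0$ elsewhere. *)

theory Defs
  imports "HOL-Analysis.Analysis"
begin

definition lsq_f :: "real^'n^'m \<Rightarrow> real^'m \<Rightarrow> real^'n \<Rightarrow> real" where
  "lsq_f A b x = (1/2) * (norm (A *v x - b))^2"

definition lsq_grad :: "real^'n^'m \<Rightarrow> real^'m \<Rightarrow> real^'n \<Rightarrow> real^'n" where
  "lsq_grad A b x = transpose A *v (A *v x - b)"

definition l0norm :: "real^'n \<Rightarrow> real" where
  "l0norm x = real (card {i. x $ i \<noteq> 0})"

definition Hobj :: "real^'n^'m \<Rightarrow> real^'m \<Rightarrow> real \<Rightarrow> real^'n \<Rightarrow> real" where
  "Hobj A b lam x = lsq_f A b x + lam * l0norm x"

definition zero_idx :: "real^'n \<Rightarrow> 'n set" where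
  "zero_idx x = {i. x $ i = 0}"

definition coord_sub :: "'n set \<Rightarrow> (real^'n) set" where
  "coord_sub I = {x. \<forall>i\<in>I. x $ i = 0}"

definition bnorm2 :: "real^'n^'n \<Rightarrow> real^'n \<Rightarrow> real" where
  "bnorm2 B v = v \<bullet> (B *v v)"

definition sym_posdef :: "real^'n^'n \<Rightarrow> bool" where
  "sym_posdef M \<longleftrightarrow> transpose M = M \<and> (\<forall>v. v \<noteq> 0 \<longrightarrow> v \<bullet> (M *v v) > 0)"

definition block_diag :: "real^'n^'n \<Rightarrow> 'n set \<Rightarrow> bool" where
  "block_diag M S \<longleftrightarrow> (\<forall>i j. (i \<in> S \<longleftrightarrow> j \<notin> S) \<longrightarrow> M $ i $ j = 0)"

text \<open>Operations on principal submatrices indexed by S: vectors indexed by S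
  are represented as functions 'n => real (only values on S matter).\<close>
definition sub_mv :: "real^'n^'n \<Rightarrow> 'n set \<Rightarrow> ('n \<Rightarrow> real) \<Rightarrow> ('n \<Rightarrow> real)" where
  "sub_mv M S v = (\<lambda>i. \<Sum>j\<in>S. M $ i $ j * v j)"

definition sub_dot :: "'n set \<Rightarrow> ('n \<Rightarrow> real) \<Rightarrow> ('n \<Rightarrow> real) \<Rightarrow> real" where
  "sub_dot S u v = (\<Sum>i\<in>S. u i * v i)"

definition sub_norm :: "'n set \<Rightarrow> ('n \<Rightarrow> real) \<Rightarrow> real" where
  "sub_norm S v = sqrt (\<Sum>i\<in>S. (v i)^2)"

definition sub_inv :: "real^'n^'n \<Rightarrow> 'n set \<Rightarrow> ('n \<Rightarrow> 'n \<Rightarrow> real)" where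
  "sub_inv M S = (THE N. (\<forall>i j. (i \<notin> S \<or> j \<notin> S) \<longrightarrow> N i j = 0) \<and>
     (\<forall>i\<in>S. \<forall>j\<in>S. (\<Sum>l\<in>S. M $ i $ l * N l j) = (if i = j then 1 else 0)))"

definition sub_fmv :: "('n \<Rightarrow> 'n \<Rightarrow> real) \<Rightarrow> 'n set \<Rightarrow> ('n \<Rightarrow> real) \<Rightarrow> ('n \<Rightarrow> real)" where
  "sub_fmv N S v = (\<lambda>i. \<Sum>j\<in>S. N i j * v j)"

definition local_minimizer :: "(real^'n \<Rightarrow> real) \<Rightarrow> real^'n \<Rightarrow> bool" where
  "local_minimizer F z \<longleftrightarrow> (\<exists>e>0. \<forall>w. dist w z < e \<longrightarrow> F z \<le> F w)"

end

theory Submission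
  imports Defs
begin

text \<open>From k0 on, every iterate lies in the coordinate subspace of the support of xs. The proximal
  step and the exact line search both decrease f, and the sufficient decrease of the proximal step
  forces the restricted gradient at y k to vanish; hence xs is stationary on its support, and there
  f v = f xs + err v / 2 with err v the squared (A^T A)-norm of v - xs. This makes the errors
  monotone, and the cluster point drives them to 0. The linear rate combines a Polyak-Lojasiewicz
  inequality on the subspace with the spectral bounds m, M of Hm k. For the superlinear rate,
  positive definiteness of Q lets the Dennis-More ratio bound both the distance from x k + dk k to
  xs and the deviation of the step size alpha k from 1.\<close>

definition vec_restrict :: "'n set \<Rightarrow> real^'n \<Rightarrow> real^'n" where
  "vec_restrict S v = (\<chi> i. if i \<in> S then v $ i else 0)"

lemma vec_restrict_nth [simp]: "vec_restrict S v $ i = (if i \<in> S then v $ i else 0)"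
  by (simp add: vec_restrict_def)

lemma vec_restrict_idem [simp]: "vec_restrict S (vec_restrict S v) = vec_restrict S v"
  by (simp add: vec_eq_iff)

lemma vec_restrict_add: "vec_restrict S (u + v) = vec_restrict S u + vec_restrict S v"
  and vec_restrict_diff: "vec_restrict S (u - v) = vec_restrict S u - vec_restrict S v"
  and vec_restrict_minus: "vec_restrict S (- v) = - vec_restrict S v"
  and vec_restrict_scaleR: "vec_restrict S (c *\<^sub>R v) = c *\<^sub>R vec_restrict S v"
  by (simp_all add: vec_eq_iff)

lemma bounded_linear_vec_restrict: "bounded_linear (vec_restrict S)"
  unfolding linear_conv_bounded_linear [symmetric]
  by (intro linearI) (simp_all add: vec_restrict_add vec_restrict_scaleR)

lemma inner_vec_restrict_left: "vec_restrict S u \<bullet> v = u \<bullet> vec_restrict S v"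
  unfolding inner_vec_def by (auto intro!: sum.cong)

lemma inner_vec_restrict_sum: "vec_restrict S u \<bullet> v = (\<Sum>i\<in>S. u $ i * v $ i)"
proof -
  have "vec_restrict S u \<bullet> v = (\<Sum>i\<in>UNIV. if i \<in> S then u $ i * v $ i else 0)"
    unfolding inner_vec_def by (rule sum.cong) auto
  then show ?thesis
    by (simp add: sum.If_cases)
qed

lemma norm_vec_restrict_le: "norm (vec_restrict S v) \<le> norm v"
proof -
  have "(norm (vec_restrict S v))^2 \<le> (norm v)^2"
    unfolding power2_norm_eq_inner inner_vec_def by (intro sum_mono) auto
  then show ?thesis
    by simp
qed

lemma vec_restrict_support: "vec_restrict (- zero_idx v) v = v"
  by (simp add: vec_eq_iff zero_idx_def)

lemma vec_restrict_eq_iff_coord_sub: "vec_restrict (- I) v = v \<longleftrightarrow> v \<in> coord_sub I"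
  by (auto simp: coord_sub_def vec_eq_iff)

lemma subspace_coord_sub: "subspace (coord_sub I)"
  unfolding subspace_def coord_sub_def by auto

lemma closest_point_coord_sub: "closest_point (coord_sub I) w = vec_restrict (- I) w"
proof (rule closest_point_unique [symmetric])
  show "convex (coord_sub I)" and "closed (coord_sub I)"
    by (simp_all add: subspace_coord_sub subspace_imp_convex closed_subspace)
  show "vec_restrict (- I) w \<in> coord_sub I"
    by (simp add: coord_sub_def)
  show "\<forall>z\<in>coord_sub I. dist w (vec_restrict (- I) w) \<le> dist w z"
  proof
    fix z assume "z \<in> coord_sub I"
    then have "(dist w (vec_restrict (- I) w))^2 \<le> (dist w z)^2"
      unfolding dist_norm power2_norm_eq_inner inner_vec_def
      by (intro sum_mono) (auto simp: coord_sub_def)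
    then show "dist w (vec_restrict (- I) w) \<le> dist w z"
      by simp
  qed
qed

lemma sub_mv_vec: "sub_mv M S (\<lambda>j. v $ j) i = (M *v vec_restrict S v) $ i"
  unfolding sub_mv_def matrix_vector_mult_def by (simp add: if_distrib sum.If_cases)

lemma sub_dot_vec: "sub_dot S (\<lambda>i. u $ i) (\<lambda>i. v $ i) = vec_restrict S u \<bullet> v"
  by (simp add: sub_dot_def inner_vec_restrict_sum)

lemma sub_norm_vec: "sub_norm S u = norm (vec_restrict S (\<chi> i. u i))"
  by (simp add: sub_norm_def norm_eq_sqrt_inner inner_vec_restrict_sum power2_eq_square)

lemma inner_transpose_matrix:
  fixes A :: "real^'n^'m"
  shows "u \<bullet> (transpose A *v w) = (A *v u) \<bullet> w"
  using dot_lmul_matrix [of u "transpose A" w] by simp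

lemma inner_normal_matrix:
  fixes A :: "real^'n^'m"
  shows "v \<bullet> ((transpose A ** A) *v w) = (A *v v) \<bullet> (A *v w)"
  by (simp only: matrix_vector_mul_assoc [symmetric] inner_transpose_matrix)

lemma bnorm2_normal_matrix:
  fixes A :: "real^'n^'m"
  shows "bnorm2 (transpose A ** A) v = (norm (A *v v))^2"
  by (simp add: bnorm2_def inner_normal_matrix power2_norm_eq_inner)

lemma lsq_grad_diff:
  fixes A :: "real^'n^'m"
  shows "lsq_grad A b v - lsq_grad A b u = (transpose A ** A) *v (v - u)"
  by (simp add: lsq_grad_def matrix_vector_mul_assoc [symmetric] algebra_simps)

lemma lsq_f_add:
  fixes A :: "real^'n^'m"
  shows "lsq_f A b (v + w) = lsq_f A b v + lsq_grad A b v \<bullet> w + 1/2 * (norm (A *v w))^2"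
proof -
  have "lsq_grad A b v \<bullet> w = (A *v w) \<bullet> (A *v v - b)"
    by (simp only: lsq_grad_def inner_commute [of _ w] inner_transpose_matrix)
  moreover have "A *v (v + w) - b = (A *v v - b) + A *v w"
    by (simp add: algebra_simps)
  ultimately show ?thesis
    by (simp add: lsq_f_def power2_norm_eq_inner algebra_simps inner_commute)
qed

lemma tendsto_lsq_grad:
  fixes A :: "real^'n^'m"
  assumes "(X \<longlongrightarrow> v) F"
  shows "((\<lambda>k. lsq_grad A b (X k)) \<longlongrightarrow> lsq_grad A b v) F"
  unfolding lsq_grad_def
  by (intro bounded_linear.tendsto [OF matrix_vector_mul_bounded_linear] tendsto_diff tendsto_const assms)

context
  fixes A :: "real^'n^'m" and b :: "real^'m" and L :: real
  assumes lipschitz: "\<forall>u v. norm (lsq_grad A b u - lsq_grad A b v) \<le> L * norm (u - v)"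
begin

lemma norm_normal_matrix_le: "norm ((transpose A ** A) *v w) \<le> L * norm w"
  using lipschitz [rule_format, of w 0] by (simp add: lsq_grad_diff)

lemma norm_matrix_sq_le: "(norm (A *v w))^2 \<le> L * (norm w)^2"
proof -
  have "(norm (A *v w))^2 = w \<bullet> ((transpose A ** A) *v w)"
    by (simp add: inner_normal_matrix power2_norm_eq_inner)
  also have "\<dots> \<le> norm w * (L * norm w)"
    by (meson norm_cauchy_schwarz norm_normal_matrix_le norm_ge_zero mult_left_mono order_trans)
  finally show ?thesis
    by (simp add: power2_eq_square algebra_simps)
qed

end

lemma norm_sq_eq_sum: "(norm (v::real^'n))^2 = (\<Sum>i\<in>UNIV. (v$i)^2)"
  unfolding power2_norm_eq_inner inner_vec_def by (simp add: power2_eq_square)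

lemma l0_prox_eq:
  fixes x y g :: "real^'n"
  assumes L: "L > 0" and mu: "mu > 0" and lam: "lam \<ge> 0"
    and opt: "\<forall>z. lam * l0norm x + L/2 * (norm (x - y + (1/L) *\<^sub>R g))^2 + mu/2 * (norm (x - y))^2
             \<le> lam * l0norm z + L/2 * (norm (z - y + (1/L) *\<^sub>R g))^2 + mu/2 * (norm (z - y))^2"
  shows "x = vec_restrict (- zero_idx x) (y - (1/(L+mu)) *\<^sub>R g)"
proof -
  define S where "S = - zero_idx x"
  define p where "p = vec_restrict S (y - (1/(L+mu)) *\<^sub>R g)"
  define q where "q z = L/2 * (norm (z - y + (1/L) *\<^sub>R g))^2 + mu/2 * (norm (z - y))^2" for z
  have q_sum: "q w = (\<Sum>i\<in>UNIV. L/2 * (w$i - y$i + g$i/L)^2 + mu/2 * (w$i - y$i)^2)" for w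
    unfolding q_def norm_sq_eq_sum by (simp add: sum.distrib sum_distrib_left)
  have q_split: "q z = q p + (L+mu)/2 * (norm (z - p))^2" if z: "vec_restrict S z = z" for z
  proof -
    have "L/2 * (z$i - y$i + g$i/L)^2 + mu/2 * (z$i - y$i)^2
        = L/2 * (p$i - y$i + g$i/L)^2 + mu/2 * (p$i - y$i)^2 + (L+mu)/2 * (z$i - p$i)^2" for i
    proof (cases "i \<in> S")
      case True
      then have gi: "g$i = (L+mu) * (y$i - p$i)"
        using L mu by (simp add: p_def field_simps)
      show ?thesis
        using L mu by (simp add: gi field_simps power2_eq_square)
    next
      case False
      then have "z$i = 0" and "p$i = 0"
        using vec_restrict_nth [of S z i] z by (simp_all add: p_def)
      then show ?thesis
        by simp
    qed
    then have "q z = (\<Sum>i\<in>UNIV. L/2 * (p$i - y$i + g$i/L)^2 + mu/2 * (p$i - y$i)^2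
                                   + (L+mu)/2 * (z$i - p$i)^2)"
      unfolding q_sum by simp
    also have "\<dots> = q p + (L+mu)/2 * (norm (z - p))^2"
      unfolding q_sum norm_sq_eq_sum by (simp add: sum.distrib sum_distrib_left)
    finally show ?thesis .
  qed
  have "l0norm p \<le> l0norm x"
  proof -
    have "{i. p $ i \<noteq> 0} \<subseteq> {i. x $ i \<noteq> 0}"
      by (auto simp: p_def S_def zero_idx_def)
    then show ?thesis
      by (simp add: l0norm_def card_mono)
  qed
  moreover have "lam * l0norm x + q x \<le> lam * l0norm p + q p"
    using opt [rule_format, of p] by (simp add: q_def add.assoc)
  ultimately have "q x \<le> q p"
    using mult_left_mono [OF _ lam] by fastforce
  then have "(L+mu)/2 * (norm (x - p))^2 \<le> 0"
    using q_split [of x] by (simp add: S_def vec_restrict_support)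
  then have "x = p"
    using L mu by (simp add: mult_le_0_iff)
  then show ?thesis
    by (simp add: p_def S_def)
qed

lemma sym_posdef_nonneg:
  "sym_posdef H \<Longrightarrow> 0 \<le> w \<bullet> (H *v w)"
  unfolding sym_posdef_def by (cases "w = 0") (auto intro: less_imp_le)

lemma sym_posdef_cauchy_schwarz:
  fixes H :: "real^'n^'n"
  assumes "sym_posdef H"
  shows "(u \<bullet> (H *v v))^2 \<le> (u \<bullet> (H *v u)) * (v \<bullet> (H *v v))"
proof (cases "v = 0")
  case False
  then have vHv: "v \<bullet> (H *v v) > 0"
    using assms by (simp add: sym_posdef_def)
  have symm: "v \<bullet> (H *v u) = u \<bullet> (H *v v)"
    using assms dot_lmul_matrix [of v H u] vector_transpose_matrix [of v H]
    by (simp add: sym_posdef_def inner_commute)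
  define t where "t = - (u \<bullet> (H *v v)) / (v \<bullet> (H *v v))"
  have "0 \<le> (u + t *\<^sub>R v) \<bullet> (H *v (u + t *\<^sub>R v))"
    by (rule sym_posdef_nonneg [OF assms])
  also have "\<dots> = u \<bullet> (H *v u) + 2 * t * (u \<bullet> (H *v v)) + t^2 * (v \<bullet> (H *v v))"
    using symm by (simp add: matrix_vector_right_distrib matrix_vector_mult_scaleR
        inner_add_left inner_add_right power2_eq_square algebra_simps)
  also have "\<dots> = u \<bullet> (H *v u) - (u \<bullet> (H *v v))^2 / (v \<bullet> (H *v v))"
    using vHv by (simp add: t_def field_simps power2_eq_square)
  finally show ?thesis
    using vHv by (simp add: field_simps)
qed simp

lemma sym_posdef_norm_mult_le:
  fixes H :: "real^'n^'n"
  assumes H: "sym_posdef H" and M: "\<forall>w. w \<bullet> (H *v w) \<le> M * (norm w)^2"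
  shows "(norm (H *v v))^2 \<le> M^2 * (norm v)^2"
proof -
  let ?h = "H *v v"
  have "((norm ?h)^2)^2 = (?h \<bullet> (H *v v))^2"
    by (simp add: power2_norm_eq_inner)
  also have "\<dots> \<le> (?h \<bullet> (H *v ?h)) * (v \<bullet> (H *v v))"
    by (rule sym_posdef_cauchy_schwarz [OF H])
  also have "\<dots> \<le> (M * (norm ?h)^2) * (M * (norm v)^2)"
    using M sym_posdef_nonneg [OF H] by (meson mult_mono order_trans)
  finally have "((norm ?h)^2)^2 \<le> (M^2 * (norm v)^2) * (norm ?h)^2"
    by (simp add: algebra_simps power2_eq_square)
  then show ?thesis
    by (cases "norm ?h = 0") (auto simp: power2_eq_square)
qed

lemma sym_posdef_inverse:
  fixes H :: "real^'n^'n"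
  assumes "sym_posdef H"
  obtains B where "B ** H = mat 1" and "H ** B = mat 1"
proof -
  have "\<forall>w. H *v w = 0 \<longrightarrow> w = 0"
    using assms by (metis sym_posdef_def inner_zero_right less_irrefl)
  then obtain B where "B ** H = mat 1"
    using matrix_left_invertible_ker by blast
  then show thesis
    using that matrix_left_right_inverse by blast
qed

lemma block_diag_restrict:
  assumes "block_diag H S"
  shows "vec_restrict S (H *v v) = H *v vec_restrict S v"
  using assms unfolding vec_eq_iff block_diag_def matrix_vector_mult_def
  by (auto intro!: sum.cong sum.neutral)

lemma block_diag_sum_row:
  assumes "block_diag H S" and "a \<in> S"
  shows "(\<Sum>l\<in>S. H $ a $ l * u l) = (\<Sum>l\<in>UNIV. H $ a $ l * u l)"
  using assms by (intro sum.mono_neutral_left) (auto simp: block_diag_def)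

lemma block_diag_sum_col:
  assumes "block_diag H S" and "c \<in> S"
  shows "(\<Sum>l\<in>S. u l * H $ l $ c) = (\<Sum>l\<in>UNIV. u l * H $ l $ c)"
  using assms by (intro sum.mono_neutral_left) (auto simp: block_diag_def)

lemma block_diag_mult_column:
  assumes bd: "block_diag H S" and c: "c \<in> S"
    and N0: "\<forall>a c. (a \<notin> S \<or> c \<notin> S) \<longrightarrow> N a c = 0"
    and HN: "\<forall>a\<in>S. \<forall>c\<in>S. (\<Sum>l\<in>S. H $ a $ l * N l c) = (if a = c then 1 else 0)"
  shows "H *v (\<chi> l. N l c) = (\<chi> r. if r = c then 1 else 0)"
proof -
  have "(H *v (\<chi> l. N l c)) $ r = (if r = c then 1 else 0)" for r
  proof (cases "r \<in> S")
    case True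
    then have "(H *v (\<chi> l. N l c)) $ r = (\<Sum>l\<in>S. H $ r $ l * N l c)"
      using N0 by (auto simp: matrix_vector_mult_def intro!: sum.mono_neutral_right)
    then show ?thesis
      using HN True c by simp
  next
    case False
    have summand: "H $ r $ l * N l c = 0" for l
      using N0 bd False by (cases "l \<in> S") (auto simp: block_diag_def)
    show ?thesis
      using False c by (auto simp: matrix_vector_mult_def summand)
  qed
  then show ?thesis
    by (simp add: vec_eq_iff)
qed

lemma sub_inv_block_diag:
  fixes H B :: "real^'n^'n"
  assumes BH: "B ** H = mat 1" and HB: "H ** B = mat 1" and bd: "block_diag H S"
  shows "sub_inv H S = (\<lambda>a c. if a \<in> S \<and> c \<in> S then B $ a $ c else 0)"
    (is "_ = ?N")
  unfolding sub_inv_def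
proof (rule the_equality)
  have "(\<Sum>l\<in>S. H $ a $ l * B $ l $ c) = (if a = c then 1 else 0)" if "a \<in> S" for a c
    using block_diag_sum_row [OF bd that] HB by (simp add: matrix_matrix_mult_def mat_def vec_eq_iff)
  then show "(\<forall>a c. (a \<notin> S \<or> c \<notin> S) \<longrightarrow> ?N a c = 0) \<and>
    (\<forall>a\<in>S. \<forall>c\<in>S. (\<Sum>l\<in>S. H $ a $ l * ?N l c) = (if a = c then 1 else 0))"
    by (auto intro!: sum.cong)
next
  fix N assume N: "(\<forall>a c. (a \<notin> S \<or> c \<notin> S) \<longrightarrow> N a c = 0) \<and>
    (\<forall>a\<in>S. \<forall>c\<in>S. (\<Sum>l\<in>S. H $ a $ l * N l c) = (if a = c then 1 else 0))"
  show "N = ?N"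
  proof (intro ext)
    fix a c
    show "N a c = ?N a c"
    proof (cases "a \<in> S \<and> c \<in> S")
      case True
      then have "(\<chi> l. N l c) = B *v (\<chi> r. if r = c then 1 else 0)"
        using block_diag_mult_column [OF bd _ conjunct1 [OF N] conjunct2 [OF N]]
        by (metis BH matrix_vector_mul_assoc matrix_vector_mul_lid)
      then show ?thesis
        using True by (simp add: vec_eq_iff matrix_vector_mult_def if_distrib sum.delta cong: if_cong)
    qed (use N in auto)
  qed
qed

lemma sub_inv_sub_mv:
  fixes H :: "real^'n^'n"
  assumes "sym_posdef H" and bd: "block_diag H S" and i: "i \<in> S"
  shows "sub_fmv (sub_inv H S) S (sub_mv H S v) i = v i"
proof -
  obtain B where BH: "B ** H = mat 1" and HB: "H ** B = mat 1"
    using sym_posdef_inverse [OF assms(1)] .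
  have "sub_fmv (sub_inv H S) S (sub_mv H S v) i = (\<Sum>j\<in>S. \<Sum>l\<in>S. B $ i $ j * H $ j $ l * v l)"
    unfolding sub_inv_block_diag [OF BH HB bd] sub_fmv_def sub_mv_def
    using i by (simp add: sum_distrib_left mult.assoc)
  also have "\<dots> = (\<Sum>l\<in>S. (\<Sum>j\<in>S. B $ i $ j * H $ j $ l) * v l)"
    by (subst sum.swap) (simp add: sum_distrib_right)
  also have "\<dots> = (\<Sum>l\<in>S. if i = l then v l else 0)"
    using block_diag_sum_col [OF bd] BH
    by (intro sum.cong) (simp_all add: matrix_matrix_mult_def mat_def vec_eq_iff)
  also have "\<dots> = v i"
    using i by simp
  finally show ?thesis .
qed

lemma eventually_support_subset:
  fixes z :: "real^'n"
  shows "eventually (\<lambda>w. - zero_idx z \<subseteq> - zero_idx w) (nhds z)"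
proof -
  have "eventually (\<lambda>w. w $ i \<noteq> 0) (nhds z)" if "z $ i \<noteq> 0" for i
    using that by (intro tendsto_imp_eventually_ne [OF tendsto_vec_nth [OF filterlim_ident]])
  then have "eventually (\<lambda>w. \<forall>i\<in>- zero_idx z. w $ i \<noteq> 0) (nhds z)"
    by (intro eventually_ball_finite) (auto simp: zero_idx_def)
  then show ?thesis
    by (rule eventually_mono) (auto simp: zero_idx_def)
qed

text \<open>Moving inside the support of z cannot decrease the convex f, while leaving it costs at
  least lam, more than the first-order gain near z.\<close>

lemma local_minimizer_Hobj:
  fixes A :: "real^'n^'m" and z :: "real^'n"
  assumes lam: "lam > 0" and stat: "vec_restrict (- zero_idx z) (lsq_grad A b z) = 0"
  shows "local_minimizer (Hobj A b lam) z"
proof -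
  define S where "S = - zero_idx z"
  define g where "g = lsq_grad A b z"
  have "eventually (\<lambda>w. S \<subseteq> - zero_idx w \<and> norm g * dist w z < lam) (nhds z)"
  proof (intro eventually_conj)
    show "eventually (\<lambda>w. S \<subseteq> - zero_idx w) (nhds z)"
      unfolding S_def by (rule eventually_support_subset)
    have "((\<lambda>w. norm g * dist w z) \<longlongrightarrow> norm g * dist z z) (nhds z)"
      by (intro tendsto_intros filterlim_ident)
    then show "eventually (\<lambda>w. norm g * dist w z < lam) (nhds z)"
      using lam by (intro order_tendstoD(2)) auto
  qed
  then obtain e where e: "e > 0"
    and near: "\<And>w. dist w z < e \<Longrightarrow> S \<subseteq> - zero_idx w \<and> norm g * dist w z < lam"
    unfolding eventually_nhds_metric by blast
  have "Hobj A b lam z \<le> Hobj A b lam w" if w: "dist w z < e" for w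
  proof -
    have f_w: "lsq_f A b w = lsq_f A b z + g \<bullet> (w - z) + 1/2 * (norm (A *v (w - z)))^2"
      using lsq_f_add [of A b z "w - z"] by (simp add: g_def)
    have supp: "S \<subseteq> - zero_idx w"
      using near [OF w] by blast
    show ?thesis
    proof (cases "- zero_idx w = S")
      case True
      then have "vec_restrict S (w - z) = w - z"
        by (simp add: vec_restrict_diff vec_restrict_support [of w, unfolded True]
            vec_restrict_support [of z, folded S_def])
      then have "g \<bullet> (w - z) = 0"
        using stat by (metis S_def g_def inner_vec_restrict_left inner_zero_left)
      moreover have "l0norm w = l0norm z"
        using True by (simp add: l0norm_def S_def zero_idx_def Compl_eq)
      ultimately show ?thesis
        using f_w by (simp add: Hobj_def)
    next
      case False
      then have "card S < card (- zero_idx w)"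
        using supp by (intro psubset_card_mono) auto
      then have l0: "l0norm z + 1 \<le> l0norm w"
        by (simp add: l0norm_def S_def zero_idx_def Compl_eq)
      have "- (g \<bullet> (w - z)) \<le> norm g * dist w z"
        using norm_cauchy_schwarz [of g "z - w"]
        by (simp add: inner_diff_right dist_norm norm_minus_commute)
      then have "lsq_f A b z - lam < lsq_f A b w"
        using f_w near [OF w] zero_le_power2 [of "norm (A *v (w - z))"] by linarith
      moreover have "lam * (l0norm z + 1) \<le> lam * l0norm w"
        using l0 lam by (simp add: mult_left_mono)
      ultimately show ?thesis
        by (simp add: Hobj_def algebra_simps)
    qed
  qed
  then show ?thesis
    unfolding local_minimizer_def using e by blast
qed

lemma convergent_antimono_from:
  fixes X :: "nat \<Rightarrow> real"
  assumes "\<forall>k\<ge>k0. X (Suc k) \<le> X k" and "\<forall>k. 0 \<le> X k"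
  obtains l where "X \<longlonglongrightarrow> l"
proof -
  have "decseq (\<lambda>j. X (j + k0))"
    using assms(1) by (intro decseq_SucI) simp
  then obtain l where "(\<lambda>j. X (j + k0)) \<longlonglongrightarrow> l"
    using assms(2) decseq_convergent by blast
  then show thesis
    using that LIMSEQ_offset by blast
qed

lemma tendsto_diff_Suc_antimono_from:
  fixes X :: "nat \<Rightarrow> real"
  assumes "\<forall>k\<ge>k0. X (Suc k) \<le> X k" and "\<forall>k. 0 \<le> X k"
  shows "(\<lambda>k. X k - X (Suc k)) \<longlonglongrightarrow> 0"
proof -
  obtain l where l: "X \<longlonglongrightarrow> l"
    using convergent_antimono_from [OF assms] .
  show ?thesis
    using tendsto_diff [OF l LIMSEQ_Suc [OF l]] by simp
qed

lemma tendsto_antimono_from_subseq: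
  fixes X :: "nat \<Rightarrow> real"
  assumes "\<forall>k\<ge>k0. X (Suc k) \<le> X k" and "\<forall>k. 0 \<le> X k"
    and r: "strict_mono r" and Xr: "(\<lambda>j. X (r j)) \<longlonglongrightarrow> a"
  shows "X \<longlonglongrightarrow> a"
proof -
  obtain l where l: "X \<longlonglongrightarrow> l"
    using convergent_antimono_from [OF assms(1,2)] .
  then have "(\<lambda>j. X (r j)) \<longlonglongrightarrow> l"
    using LIMSEQ_subseq_LIMSEQ [OF l r] by (simp add: o_def)
  then show ?thesis
    using l Xr LIMSEQ_unique by blast
qed

text \<open>A Polyak-Lojasiewicz inequality on a coordinate subspace: the restricted transpose is
  injective on the image of the subspace under A.\<close>

lemma normal_matrix_restrict_lower_bound:
  fixes A :: "real^'n^'m"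
  obtains eps where "eps > 0"
    and "\<And>v. vec_restrict S v = v \<Longrightarrow> eps * norm (A *v v) \<le> norm (vec_restrict S ((transpose A ** A) *v v))"
proof -
  define R where "R = (\<lambda>v. A *v v) ` coord_sub (- S)"
  have "subspace R"
    unfolding R_def by (intro linear_subspace_image matrix_vector_mul_linear subspace_coord_sub)
  moreover have "bounded_linear (\<lambda>w. vec_restrict S (transpose A *v w))"
    using bounded_linear_compose [OF bounded_linear_vec_restrict matrix_vector_mul_bounded_linear] .
  moreover have "\<forall>w\<in>R. vec_restrict S (transpose A *v w) = 0 \<longrightarrow> w = 0"
  proof (intro ballI impI)
    fix w assume "w \<in> R" and w0: "vec_restrict S (transpose A *v w) = 0"
    then obtain v where v: "vec_restrict S v = v" and w: "w = A *v v"
      by (auto simp: R_def vec_restrict_eq_iff_coord_sub [symmetric])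
    have "w \<bullet> w = vec_restrict S v \<bullet> (transpose A *v w)"
      by (metis v w inner_transpose_matrix)
    also have "\<dots> = 0"
      by (simp only: inner_vec_restrict_left w0 inner_zero_right)
    finally show "w = 0"
      by simp
  qed
  ultimately obtain eps where "eps > 0" and eps: "\<forall>w\<in>R. eps * norm w \<le> norm (vec_restrict S (transpose A *v w))"
    using injective_imp_isometric [OF closed_subspace] by blast
  moreover have "A *v v \<in> R" if "vec_restrict S v = v" for v
    using that by (auto simp: R_def vec_restrict_eq_iff_coord_sub [symmetric])
  ultimately show thesis
    using that by (simp add: matrix_vector_mul_assoc [symmetric])
qed

lemma sub_posdef_lower_bound:
  fixes A :: "real^'n^'m"
  assumes pd: "\<forall>v. (\<exists>i\<in>S. v i \<noteq> 0) \<longrightarrow> sub_dot S v (sub_mv (transpose A ** A) S v) > 0"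
  obtains lm where "lm > 0" and "\<And>v. vec_restrict S v = v \<Longrightarrow> lm * (norm v)^2 \<le> (norm (A *v v))^2"
proof -
  have "\<forall>v\<in>coord_sub (- S). A *v v = 0 \<longrightarrow> v = 0"
  proof (intro ballI impI)
    fix v assume "v \<in> coord_sub (- S)" and Av: "A *v v = 0"
    then have v: "vec_restrict S v = v"
      by (simp add: vec_restrict_eq_iff_coord_sub [symmetric])
    have "sub_dot S (\<lambda>i. v $ i) (sub_mv (transpose A ** A) S (\<lambda>i. v $ i)) = 0"
      using v Av by (simp add: sub_dot_def sub_mv_vec inner_vec_restrict_sum [symmetric] inner_normal_matrix)
    then have "\<forall>i\<in>S. v $ i = 0"
      using pd by force
    then show "v = 0"
      using v by (auto simp: vec_eq_iff) (metis vec_restrict_nth)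
  qed
  then obtain eps where "eps > 0" and eps: "\<forall>v\<in>coord_sub (- S). eps * norm v \<le> norm (A *v v)"
    using injective_imp_isometric [OF closed_subspace [OF subspace_coord_sub] subspace_coord_sub
        matrix_vector_mul_bounded_linear] by blast
  moreover have "eps^2 * (norm v)^2 \<le> (norm (A *v v))^2" if "vec_restrict S v = v" for v
  proof -
    have "v \<in> coord_sub (- S)"
      using that vec_restrict_eq_iff_coord_sub [of "- S" v] by simp
    then have "(eps * norm v)^2 \<le> (norm (A *v v))^2"
      using eps \<open>eps > 0\<close> by (intro power_mono) auto
    then show ?thesis
      by (simp add: power_mult_distrib)
  qed
  ultimately show thesis
    using that by (metis zero_less_power)
qed

lemma norm_restrict_normal_matrix_ge:
  fixes A :: "real^'n^'m"
  assumes v: "vec_restrict S v = v" and lm: "lm * (norm v)^2 \<le> (norm (A *v v))^2"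
  shows "lm * norm v \<le> norm (vec_restrict S ((transpose A ** A) *v v))"
proof -
  have "lm * (norm v)^2 \<le> v \<bullet> vec_restrict S ((transpose A ** A) *v v)"
    using lm v by (metis inner_normal_matrix inner_vec_restrict_left power2_norm_eq_inner)
  also have "\<dots> \<le> norm v * norm (vec_restrict S ((transpose A ** A) *v v))"
    by (rule norm_cauchy_schwarz)
  finally show ?thesis
    by (cases "norm v = 0") (auto simp: power2_eq_square mult.assoc)
qed

locale vmepiht_tail =
  fixes A :: "real^'n^'m" and b :: "real^'m"
    and L lam mu :: real
    and x y :: "nat \<Rightarrow> real^'n"
    and Hm :: "nat \<Rightarrow> real^'n^'n"
    and alpha :: "nat \<Rightarrow> real"
    and xs :: "real^'n" and k0 :: nat
  assumes L_pos: "L > 0"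
    and L_lip: "\<forall>u v. norm (lsq_grad A b u - lsq_grad A b v) \<le> L * norm (u - v)"
    and lam_pos: "lam > 0"
    and mu_pos: "mu > 0"
    and x_step: "\<forall>k. \<forall>z. lam * l0norm (x k)
                  + L/2 * (norm (x k - y k + (1/L) *\<^sub>R lsq_grad A b (y k)))^2
                  + mu/2 * (norm (x k - y k))^2
               \<le> lam * l0norm z
                  + L/2 * (norm (z - y k + (1/L) *\<^sub>R lsq_grad A b (y k)))^2
                  + mu/2 * (norm (z - y k))^2"
    and H_spd: "\<forall>k. sym_posdef (Hm k)"
    and H_block: "\<forall>k. block_diag (Hm k) (- zero_idx (x k))"
    and alpha_def: "\<forall>k. let S = - zero_idx (x k);
                          g = (\<lambda>j. lsq_grad A b (x k) $ j);
                          d = (\<lambda>i. - sub_mv (Hm k) S g i);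
                          Qd = sub_mv (transpose A ** A) S d
                      in alpha k = (if (\<forall>i\<in>S. Qd i = 0) then 0
                                    else - sub_dot S g d / sub_dot S d Qd)"
    and y_step: "\<forall>k. y (Suc k) = closest_point (coord_sub (zero_idx (x k)))
                         (x k - alpha k *\<^sub>R (Hm k *v lsq_grad A b (x k)))"
    and cluster: "\<exists>r. strict_mono r \<and> (x \<circ> r) \<longlonglongrightarrow> xs"
    and k0_supp: "\<forall>k\<ge>k0. zero_idx (y k) = zero_idx (x k) \<and> zero_idx (x k) = zero_idx xs"
    and alpha_pos: "\<forall>k\<ge>k0. alpha k > 0"
begin

abbreviation "G \<equiv> transpose A ** A"
abbreviation "f \<equiv> lsq_f A b"
abbreviation "grad \<equiv> lsq_grad A b"
abbreviation "supp \<equiv> - zero_idx xs"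
abbreviation "err v \<equiv> bnorm2 G (v - xs)"

definition "gk k = vec_restrict supp (grad (x k))"
definition "dk k = - (Hm k *v gk k)"
definition "prox_step = 1 / (L + mu)"

lemma prox_step_pos: "prox_step > 0"
  using L_pos mu_pos by (simp add: prox_step_def)

lemma L_prox_step_le: "L * prox_step \<le> 1"
  using L_pos mu_pos by (simp add: prox_step_def field_simps)

lemma support_x_eq: "k0 \<le> k \<Longrightarrow> - zero_idx (x k) = supp"
  using k0_supp by simp

lemma x_supported: "k0 \<le> k \<Longrightarrow> vec_restrict supp (x k) = x k"
  using vec_restrict_support [of "x k"] support_x_eq by simp

lemma y_supported: "k0 \<le> k \<Longrightarrow> vec_restrict supp (y k) = y k"
  using vec_restrict_support [of "y k"] k0_supp by simp

lemma block_diag_supp: "k0 \<le> k \<Longrightarrow> block_diag (Hm k) supp"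
  using H_block support_x_eq by metis

lemma dk_supported: "k0 \<le> k \<Longrightarrow> vec_restrict supp (dk k) = dk k"
  by (simp add: dk_def gk_def vec_restrict_minus block_diag_restrict [OF block_diag_supp])

lemma x_eq: "k0 \<le> k \<Longrightarrow> x k = y k - prox_step *\<^sub>R vec_restrict supp (grad (y k))"
  using l0_prox_eq [OF L_pos mu_pos less_imp_le [OF lam_pos] spec [OF x_step, of k]]
  by (simp add: support_x_eq y_supported vec_restrict_diff vec_restrict_scaleR prox_step_def)

lemma y_Suc_eq: "k0 \<le> k \<Longrightarrow> y (Suc k) = x k + alpha k *\<^sub>R dk k"
  using y_step [rule_format, of k]
  by (simp add: closest_point_coord_sub support_x_eq x_supported vec_restrict_diff vec_restrict_scaleR
      block_diag_restrict [OF block_diag_supp] dk_def gk_def)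

lemma sub_direction_eq: "(\<lambda>i. - sub_mv (Hm k) supp (\<lambda>j. grad (x k) $ j) i) = (\<lambda>i. dk k $ i)"
  by (simp add: fun_eq_iff sub_mv_vec dk_def gk_def)

lemma norm_A_dk_pos: assumes "k0 \<le> k" shows "(norm (A *v dk k))^2 > 0"
  and alpha_eq: "alpha k = - (gk k \<bullet> dk k) / (norm (A *v dk k))^2"
proof -
  have Qd: "sub_mv G supp (\<lambda>i. dk k $ i) = (\<lambda>i. (G *v dk k) $ i)"
    using dk_supported [OF assms] by (simp add: fun_eq_iff sub_mv_vec)
  have "sub_dot supp (\<lambda>i. grad (x k) $ i) (\<lambda>i. dk k $ i) = gk k \<bullet> dk k"
    by (simp add: sub_dot_vec gk_def)
  moreover have "sub_dot supp (\<lambda>i. dk k $ i) (\<lambda>i. (G *v dk k) $ i) = (norm (A *v dk k))^2"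
    using dk_supported [OF assms]
    by (simp add: sub_dot_vec inner_normal_matrix power2_norm_eq_inner)
  ultimately have alpha_k: "alpha k = (if \<forall>i\<in>supp. (G *v dk k) $ i = 0 then 0
      else - (gk k \<bullet> dk k) / (norm (A *v dk k))^2)"
    using alpha_def [rule_format, of k] by (simp add: Let_def support_x_eq [OF assms] sub_direction_eq Qd)
  moreover have "alpha k \<noteq> 0"
    using alpha_pos assms by (simp add: less_imp_neq [symmetric])
  ultimately show alpha: "alpha k = - (gk k \<bullet> dk k) / (norm (A *v dk k))^2"
    by (simp split: if_split_asm)
  then have "(norm (A *v dk k))^2 \<noteq> 0"
    using \<open>alpha k \<noteq> 0\<close> by auto
  then show "(norm (A *v dk k))^2 > 0"
    by simp
qed

lemma f_y_Suc_eq: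
  assumes k: "k0 \<le> k"
  shows "f (y (Suc k)) = f (x k) - (gk k \<bullet> dk k)^2 / (2 * (norm (A *v dk k))^2)"
proof -
  define s where "s = gk k \<bullet> dk k"
  define a where "a = (norm (A *v dk k))^2"
  have "grad (x k) \<bullet> dk k = s"
    using dk_supported [OF k] by (metis s_def gk_def inner_vec_restrict_left)
  then have "f (y (Suc k)) = f (x k) + alpha k * s + (alpha k)^2 / 2 * a"
    by (simp add: y_Suc_eq [OF k] lsq_f_add matrix_vector_mult_scaleR power_mult_distrib a_def)
  moreover have "alpha k = - s / a" and "a > 0"
    using alpha_eq [OF k] norm_A_dk_pos [OF k] by (simp_all add: s_def a_def)
  ultimately show ?thesis
    unfolding s_def [symmetric] a_def [symmetric] by (simp add: field_simps power2_eq_square)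
qed

lemma f_x_le:
  assumes k: "k0 \<le> k"
  shows "f (x k) \<le> f (y k) - prox_step/2 * (norm (vec_restrict supp (grad (y k))))^2"
proof -
  define h where "h = vec_restrict supp (grad (y k))"
  have "grad (y k) \<bullet> h = (norm h)^2"
    by (metis h_def inner_vec_restrict_left vec_restrict_idem power2_norm_eq_inner inner_commute)
  moreover have "x k = y k + (- prox_step) *\<^sub>R h"
    using x_eq [OF k] by (simp add: h_def)
  ultimately have "f (x k) = f (y k) - prox_step * (norm h)^2 + prox_step^2 / 2 * (norm (A *v h))^2"
    using lsq_f_add [of A b "y k" "(- prox_step) *\<^sub>R h"]
    unfolding matrix_vector_mult_scaleR norm_scaleR inner_scaleR_right
    by (simp add: power_mult_distrib)
  also have "\<dots> \<le> f (y k) - prox_step * (norm h)^2 + prox_step^2 / 2 * (L * (norm h)^2)"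
    using norm_matrix_sq_le [OF L_lip, of h] by (simp add: mult_left_mono)
  also have "\<dots> \<le> f (y k) - prox_step/2 * (norm h)^2"
  proof -
    have "prox_step * (L * prox_step) * (norm h)^2 \<le> prox_step * (norm h)^2"
      using L_prox_step_le prox_step_pos by (intro mult_right_mono mult_left_le) auto
    then show ?thesis
      by (simp add: power2_eq_square algebra_simps)
  qed
  finally show ?thesis
    by (simp add: h_def)
qed

lemma f_y_Suc_le_f_x: "k0 \<le> k \<Longrightarrow> f (y (Suc k)) \<le> f (x k)"
  using f_y_Suc_eq norm_A_dk_pos by simp

lemma f_x_le_f_y: assumes "k0 \<le> k" shows "f (x k) \<le> f (y k)"
proof -
  have "0 \<le> prox_step/2 * (norm (vec_restrict supp (grad (y k))))^2"
    using prox_step_pos by simp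
  then show ?thesis
    using f_x_le [OF assms] by linarith
qed

lemma restrict_grad_y_tendsto: "(\<lambda>k. vec_restrict supp (grad (y k))) \<longlonglongrightarrow> 0"
proof -
  define X where "X k = f (y k)" for k
  have "\<forall>k\<ge>k0. X (Suc k) \<le> X k" and "\<forall>k. 0 \<le> X k"
    using f_y_Suc_le_f_x f_x_le_f_y by (auto simp: X_def lsq_f_def intro: order_trans)
  then have "(\<lambda>k. sqrt (2 / prox_step * (X k - X (Suc k)))) \<longlonglongrightarrow> sqrt (2 / prox_step * 0)"
    by (intro tendsto_real_sqrt tendsto_mult_left tendsto_diff_Suc_antimono_from)
  moreover have "eventually (\<lambda>k. norm (vec_restrict supp (grad (y k)))
      \<le> sqrt (2 / prox_step * (X k - X (Suc k)))) sequentially"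
    using eventually_ge_at_top [of k0]
  proof eventually_elim
    case (elim k)
    show ?case
    proof (rule real_le_rsqrt)
      have "prox_step/2 * (norm (vec_restrict supp (grad (y k))))^2 \<le> X k - X (Suc k)"
        using f_x_le [OF elim] f_y_Suc_le_f_x [OF elim] by (simp add: X_def)
      then show "(norm (vec_restrict supp (grad (y k))))^2 \<le> 2 / prox_step * (X k - X (Suc k))"
        using prox_step_pos by (simp add: field_simps)
    qed
  qed
  ultimately show ?thesis
    using Lim_null_comparison by auto
qed

text \<open>y k - x k is prox_step times the restricted gradient at y k, which tends to zero; so y k
  converges to xs along the same subsequence as x k.\<close>

lemma restrict_grad_xs: "vec_restrict supp (grad xs) = 0"
proof -
  define h where "h k = vec_restrict supp (grad (y k))" for k
  obtain r where r: "strict_mono r" and xr: "(\<lambda>j. x (r j)) \<longlonglongrightarrow> xs"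
    using cluster by (auto simp: o_def)
  have hr: "(\<lambda>j. h (r j)) \<longlonglongrightarrow> 0"
    using LIMSEQ_subseq_LIMSEQ [OF restrict_grad_y_tendsto r] by (simp add: h_def o_def)
  have "(\<lambda>j. x (r j) + prox_step *\<^sub>R h (r j)) \<longlonglongrightarrow> xs + prox_step *\<^sub>R 0"
    by (intro tendsto_intros xr hr)
  moreover have "eventually (\<lambda>j. x (r j) + prox_step *\<^sub>R h (r j) = y (r j)) sequentially"
    using eventually_ge_at_top [of k0]
  proof eventually_elim
    case (elim j)
    then have "k0 \<le> r j"
      using seq_suble [OF r, of j] by simp
    then show ?case
      using x_eq [of "r j"] by (simp add: h_def)
  qed
  ultimately have "(\<lambda>j. y (r j)) \<longlonglongrightarrow> xs + prox_step *\<^sub>R 0"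
    by (rule Lim_transform_eventually)
  then have "(\<lambda>j. h (r j)) \<longlonglongrightarrow> vec_restrict supp (grad xs)"
    unfolding h_def by (intro bounded_linear.tendsto [OF bounded_linear_vec_restrict] tendsto_lsq_grad) simp
  then show ?thesis
    using hr LIMSEQ_unique by blast
qed

lemma f_eq_err:
  assumes v: "vec_restrict supp v = v"
  shows "f v = f xs + err v / 2"
proof -
  have "grad xs \<bullet> (v - xs) = vec_restrict supp (grad xs) \<bullet> (v - xs)"
    using v vec_restrict_support [of xs]
    by (metis inner_vec_restrict_left vec_restrict_diff)
  then have "grad xs \<bullet> (v - xs) = 0"
    by (simp add: restrict_grad_xs)
  then show ?thesis
    using lsq_f_add [of A b xs "v - xs"] by (simp add: bnorm2_normal_matrix)
qed

lemma err_nonneg: "0 \<le> err v"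
  by (simp add: bnorm2_normal_matrix)

lemma err_x_le_err_y: "k0 \<le> k \<Longrightarrow> err (x k) \<le> err (y k)"
  using f_x_le_f_y f_eq_err [OF x_supported] f_eq_err [OF y_supported] by fastforce

lemma err_y_Suc_le_err_x: "k0 \<le> k \<Longrightarrow> err (y (Suc k)) \<le> err (x k)"
  using f_y_Suc_le_f_x f_eq_err [OF x_supported] f_eq_err [OF y_supported, of "Suc k"] by fastforce

lemma err_x_antimono: "\<forall>k\<ge>k0. err (x (Suc k)) \<le> err (x k)"
  using err_x_le_err_y err_y_Suc_le_err_x by (meson le_SucI order_trans)

lemma err_y_antimono: "\<forall>k\<ge>k0. err (y (Suc k)) \<le> err (y k)"
  using err_x_le_err_y err_y_Suc_le_err_x by (meson order_trans)

lemma err_x_tendsto: "(\<lambda>k. err (x k)) \<longlonglongrightarrow> 0"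
proof -
  obtain r where r: "strict_mono r" and xr: "(\<lambda>j. x (r j)) \<longlonglongrightarrow> xs"
    using cluster by (auto simp: o_def)
  have "(\<lambda>j. (norm (A *v (x (r j) - xs)))^2) \<longlonglongrightarrow> (norm (A *v (xs - xs)))^2"
    by (intro tendsto_intros bounded_linear.tendsto [OF matrix_vector_mul_bounded_linear] xr)
  then show ?thesis
    using tendsto_antimono_from_subseq [OF err_x_antimono _ r] err_nonneg
    by (simp add: bnorm2_normal_matrix)
qed

lemma err_y_tendsto: "(\<lambda>k. err (y k)) \<longlonglongrightarrow> 0"
proof -
  have "eventually (\<lambda>k. norm (err (y (Suc k))) \<le> err (x k)) sequentially"
    using eventually_ge_at_top [of k0]
    by eventually_elim (simp add: err_nonneg err_y_Suc_le_err_x)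
  then have "(\<lambda>k. err (y (Suc k))) \<longlonglongrightarrow> 0"
    by (rule Lim_null_comparison [OF _ err_x_tendsto])
  then show ?thesis
    by (rule LIMSEQ_imp_Suc)
qed

lemma y_local_minimizer:
  assumes k: "k0 \<le> k" and err0: "err (y k) = 0"
  shows "local_minimizer (Hobj A b lam) (y k)"
proof (rule local_minimizer_Hobj [OF lam_pos])
  have "A *v (y k - xs) = 0"
    using err0 by (simp add: bnorm2_normal_matrix)
  then have "grad (y k) = grad xs"
    using lsq_grad_diff [of A b "y k" xs] by (simp add: matrix_vector_mul_assoc [symmetric])
  then show "vec_restrict (- zero_idx (y k)) (grad (y k)) = 0"
    using k0_supp k restrict_grad_xs by simp
qed

lemma restrict_grad_eq: "vec_restrict supp (grad v) = vec_restrict supp (G *v (v - xs))"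
proof -
  have "grad v = grad xs + G *v (v - xs)"
    using lsq_grad_diff [of A b v xs] by (simp add: algebra_simps)
  then show ?thesis
    by (simp add: vec_restrict_add restrict_grad_xs)
qed

lemma err_x_Suc_le:
  assumes k: "k0 \<le> k"
  shows "err (x (Suc k)) \<le> err (x k) - (gk k \<bullet> dk k)^2 / (norm (A *v dk k))^2"
proof -
  have "err (y (Suc k)) = err (x k) - (gk k \<bullet> dk k)^2 / (norm (A *v dk k))^2"
    using f_y_Suc_eq [OF k] f_eq_err [OF x_supported [OF k]] f_eq_err [OF y_supported, of "Suc k"] k
    by (simp add: field_simps)
  then show ?thesis
    using err_x_le_err_y [of "Suc k"] k by simp
qed

context
  fixes m M :: real
  assumes m_pos: "0 < m" and m_le_M: "m \<le> M"
    and Hm_bounds: "\<forall>k v. m * (norm v)^2 \<le> v \<bullet> (Hm k *v v) \<and> v \<bullet> (Hm k *v v) \<le> M * (norm v)^2"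
begin

lemma line_search_decrease_ge:
  assumes k: "k0 \<le> k"
  shows "m^2 / (L * M^2) * (norm (gk k))^2 \<le> (gk k \<bullet> dk k)^2 / (norm (A *v dk k))^2"
proof -
  let ?g = "gk k"
  have "0 \<le> m * (norm ?g)^2" and "m * (norm ?g)^2 \<le> - (?g \<bullet> dk k)"
    using m_pos Hm_bounds by (simp_all add: dk_def)
  then have slope: "(m * (norm ?g)^2)^2 \<le> (?g \<bullet> dk k)^2"
    using power_mono [of "m * (norm ?g)^2" "- (?g \<bullet> dk k)" 2] by simp
  have "(norm (dk k))^2 \<le> M^2 * (norm ?g)^2"
    using sym_posdef_norm_mult_le [of "Hm k" M ?g] H_spd Hm_bounds by (simp add: dk_def)
  then have curv: "(norm (A *v dk k))^2 \<le> L * (M^2 * (norm ?g)^2)"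
    using norm_matrix_sq_le [OF L_lip, of "dk k"] L_pos by (meson mult_left_mono less_imp_le order_trans)
  have "m^2 / (L * M^2) * (norm ?g)^2 * (norm (A *v dk k))^2
      \<le> m^2 / (L * M^2) * (norm ?g)^2 * (L * (M^2 * (norm ?g)^2))"
    using curv L_pos by (intro mult_left_mono) auto
  also have "\<dots> = (m * (norm ?g)^2)^2"
    using L_pos m_pos m_le_M by (simp add: field_simps power2_eq_square)
  finally show ?thesis
    using slope norm_A_dk_pos [OF k] by (simp add: pos_le_divide_eq)
qed

lemma linear_rate: "\<exists>c. 0 \<le> c \<and> c < 1 \<and> (\<forall>k\<ge>k0. err (x (Suc k)) \<le> c * err (x k))"
proof -
  obtain eps where eps: "eps > 0"
    and pl: "\<And>v. vec_restrict supp v = v \<Longrightarrow> eps * norm (A *v v) \<le> norm (vec_restrict supp (G *v v))"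
    using normal_matrix_restrict_lower_bound by blast
  define kap where "kap = m^2 / (L * M^2)"
  define c where "c = max 0 (1 - kap * eps^2)"
  have kap: "kap > 0"
    using m_pos m_le_M L_pos by (simp add: kap_def)
  have "err (x (Suc k)) \<le> c * err (x k)" if k: "k0 \<le> k" for k
  proof -
    have "eps * norm (A *v (x k - xs)) \<le> norm (gk k)"
      using pl [of "x k - xs"] restrict_grad_eq [of "x k"]
      by (simp add: gk_def vec_restrict_diff x_supported [OF k] vec_restrict_support)
    then have "(eps * norm (A *v (x k - xs)))^2 \<le> (norm (gk k))^2"
      using eps by (intro power_mono) auto
    then have "kap * (eps^2 * err (x k)) \<le> kap * (norm (gk k))^2"
      using kap by (simp add: bnorm2_normal_matrix power_mult_distrib)
    then have "err (x (Suc k)) \<le> (1 - kap * eps^2) * err (x k)"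
      using err_x_Suc_le [OF k] line_search_decrease_ge [OF k] by (simp add: kap_def algebra_simps)
    also have "\<dots> \<le> c * err (x k)"
      by (simp add: c_def err_nonneg mult_right_mono)
    finally show ?thesis .
  qed
  moreover have "0 \<le> c" and "c < 1"
    using kap eps by (simp_all add: c_def)
  ultimately show ?thesis
    by blast
qed

end


lemma norm_dk_pos: "k0 \<le> k \<Longrightarrow> norm (dk k) > 0"
  using norm_A_dk_pos by fastforce

definition dennis_more :: "nat \<Rightarrow> real" where
  "dennis_more k = norm (gk k + vec_restrict supp (G *v dk k)) / norm (dk k)"

text \<open>The principal submatrix of the inverse of Hm k maps dk k back to - gk k, so the ratio in
  part (3) is \<^const>\<open>dennis_more\<close>.\<close>

lemma dennis_more_eq:
  assumes k: "k0 \<le> k"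
  shows "(let S = supp; d = (\<lambda>i. - sub_mv (Hm k) S (\<lambda>j. grad (x k) $ j) i)
          in sub_norm S (\<lambda>i. sub_fmv (sub_inv (Hm k) S) S d i - sub_mv G S d i) / sub_norm S d)
       = dennis_more k"
proof -
  have inv: "sub_fmv (sub_inv (Hm k) supp) supp (\<lambda>i. dk k $ i) i = - gk k $ i" if i: "i \<in> supp" for i
  proof -
    have "sub_fmv (sub_inv (Hm k) supp) supp (\<lambda>i. dk k $ i) i
        = - sub_fmv (sub_inv (Hm k) supp) supp (sub_mv (Hm k) supp (\<lambda>j. grad (x k) $ j)) i"
      unfolding sub_direction_eq [symmetric] sub_fmv_def by (simp add: sum_negf)
    also have "\<dots> = - grad (x k) $ i"
      using sub_inv_sub_mv [OF _ block_diag_supp [OF k] i] H_spd by simp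
    finally show ?thesis
      using i by (simp add: gk_def)
  qed
  have "vec_restrict supp (\<chi> i. sub_fmv (sub_inv (Hm k) supp) supp (\<lambda>i. dk k $ i) i
                              - sub_mv G supp (\<lambda>i. dk k $ i) i)
      = - (gk k + vec_restrict supp (G *v dk k))"
    using inv by (auto simp: vec_eq_iff sub_mv_vec dk_supported [OF k] gk_def)
  then have "sub_norm supp (\<lambda>i. sub_fmv (sub_inv (Hm k) supp) supp (\<lambda>i. dk k $ i) i
                              - sub_mv G supp (\<lambda>i. dk k $ i) i)
      = norm (gk k + vec_restrict supp (G *v dk k))"
    unfolding sub_norm_vec by (metis norm_minus_cancel)
  then show ?thesis
    unfolding Let_def sub_direction_eq by (simp add: sub_norm_vec dk_supported [OF k] dennis_more_def)
qed

lemma dennis_more_nonneg: "0 \<le> dennis_more k"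
  by (simp add: dennis_more_def)

lemma norm_x_le_norm_y:
  assumes k: "k0 \<le> k"
  shows "norm (x k - xs) \<le> 2 * norm (y k - xs)"
proof -
  define e where "e = y k - xs"
  have "x k - xs = e - prox_step *\<^sub>R vec_restrict supp (G *v e)"
    using x_eq [OF k] restrict_grad_eq [of "y k"] by (simp add: e_def)
  then have "norm (x k - xs) \<le> norm e + prox_step * norm (vec_restrict supp (G *v e))"
    using norm_triangle_ineq4 [of e "prox_step *\<^sub>R vec_restrict supp (G *v e)"] prox_step_pos
    by simp
  also have "\<dots> \<le> norm e + prox_step * (L * norm e)"
    using norm_vec_restrict_le [of supp "G *v e"] norm_normal_matrix_le [OF L_lip, of e] prox_step_pos
    by (intro add_left_mono mult_left_mono) auto
  also have "\<dots> \<le> 2 * norm e"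
    using L_prox_step_le mult_right_mono [OF L_prox_step_le norm_ge_zero [of e]]
    by (simp add: algebra_simps)
  finally show ?thesis
    by (simp add: e_def)
qed

context
  fixes lm :: real
  assumes lm_pos: "lm > 0"
    and lm_le: "\<And>v. vec_restrict supp v = v \<Longrightarrow> lm * (norm v)^2 \<le> (norm (A *v v))^2"
begin

lemma norm_x_sub_xs_add_dk_le:
  assumes k: "k0 \<le> k"
  shows "lm * norm (x k - xs + dk k) \<le> dennis_more k * norm (dk k)"
proof -
  have supp: "vec_restrict supp (x k - xs + dk k) = x k - xs + dk k"
    by (simp add: vec_restrict_add vec_restrict_diff x_supported [OF k] dk_supported [OF k]
        vec_restrict_support)
  have "vec_restrict supp (G *v (x k - xs + dk k)) = gk k + vec_restrict supp (G *v dk k)"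
    using restrict_grad_eq [of "x k"] by (simp add: gk_def matrix_vector_right_distrib vec_restrict_add)
  then show ?thesis
    using norm_restrict_normal_matrix_ge [OF supp lm_le [OF supp]] norm_dk_pos [OF k]
    by (simp add: dennis_more_def)
qed

lemma abs_alpha_minus_one_le:
  assumes k: "k0 \<le> k"
  shows "\<bar>alpha k - 1\<bar> \<le> dennis_more k / lm"
proof -
  define r where "r = gk k + vec_restrict supp (G *v dk k)"
  have curv: "(norm (A *v dk k))^2 = dk k \<bullet> vec_restrict supp (G *v dk k)"
    by (metis dk_supported [OF k] inner_normal_matrix inner_vec_restrict_left power2_norm_eq_inner)
  then have "alpha k - 1 = - (dk k \<bullet> r) / (norm (A *v dk k))^2"
    using norm_A_dk_pos [OF k]
    by (simp add: alpha_eq [OF k] r_def inner_add_right inner_commute field_simps)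
  then have "\<bar>alpha k - 1\<bar> = \<bar>dk k \<bullet> r\<bar> / (norm (A *v dk k))^2"
    by simp
  also have "\<dots> \<le> (dennis_more k * (norm (dk k))^2) / (lm * (norm (dk k))^2)"
  proof (rule frac_le)
    have "\<bar>dk k \<bullet> r\<bar> \<le> norm (dk k) * norm r"
      by (rule Cauchy_Schwarz_ineq2)
    also have "\<dots> = dennis_more k * (norm (dk k))^2"
      using norm_dk_pos [OF k] by (simp add: dennis_more_def r_def power2_eq_square)
    finally show "\<bar>dk k \<bullet> r\<bar> \<le> dennis_more k * (norm (dk k))^2" .
    show "lm * (norm (dk k))^2 \<le> (norm (A *v dk k))^2"
      by (rule lm_le [OF dk_supported [OF k]])
  qed (use lm_pos norm_dk_pos [OF k] in \<open>simp_all add: dennis_more_def\<close>)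
  also have "\<dots> = dennis_more k / lm"
    using norm_dk_pos [OF k] by simp
  finally show ?thesis .
qed

lemma norm_y_Suc_sub_xs_le:
  assumes k: "k0 \<le> k"
  shows "norm (y (Suc k) - xs) \<le> 2 * dennis_more k / lm * norm (dk k)"
proof -
  have "y (Suc k) - xs = (x k - xs + dk k) + (alpha k - 1) *\<^sub>R dk k"
    by (simp add: y_Suc_eq [OF k] algebra_simps)
  then have "norm (y (Suc k) - xs) \<le> norm (x k - xs + dk k) + \<bar>alpha k - 1\<bar> * norm (dk k)"
    by (metis norm_scaleR norm_triangle_ineq)
  also have "\<dots> \<le> dennis_more k * norm (dk k) / lm + dennis_more k / lm * norm (dk k)"
    using norm_x_sub_xs_add_dk_le [OF k] abs_alpha_minus_one_le [OF k] lm_pos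
    by (intro add_mono mult_right_mono) (simp_all add: field_simps)
  finally show ?thesis
    by (simp add: field_simps)
qed

lemma norm_dk_le:
  assumes k: "k0 \<le> k" and small: "dennis_more k \<le> lm / 2"
  shows "norm (dk k) \<le> 2 * norm (x k - xs)"
proof -
  have "lm * norm (x k - xs + dk k) \<le> lm / 2 * norm (dk k)"
    using norm_x_sub_xs_add_dk_le [OF k] mult_right_mono [OF small norm_ge_zero [of "dk k"]]
    by linarith
  then have "norm (x k - xs + dk k) \<le> norm (dk k) / 2"
    using lm_pos by (simp add: field_simps)
  moreover have "norm (dk k) \<le> norm (x k - xs + dk k) + norm (x k - xs)"
    using norm_triangle_ineq4 [of "x k - xs + dk k" "x k - xs"] by simp
  ultimately show ?thesis
    by linarith
qed

lemma superlinear_step: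
  assumes k: "k0 \<le> k" and small: "dennis_more k \<le> lm / 2"
  shows "norm (x (Suc k) - xs) \<le> 8 / lm * dennis_more k * norm (x k - xs)"
proof -
  have "norm (x (Suc k) - xs) \<le> 2 * (2 * dennis_more k / lm * norm (dk k))"
    using norm_x_le_norm_y [of "Suc k"] norm_y_Suc_sub_xs_le [OF k] k by simp
  also have "\<dots> \<le> 2 * (2 * dennis_more k / lm * (2 * norm (x k - xs)))"
    using norm_dk_le [OF k small] dennis_more_nonneg [of k] lm_pos by (intro mult_left_mono) auto
  finally show ?thesis
    by (simp add: field_simps)
qed

end

lemma superlinear:
  assumes pd: "\<forall>v. (\<exists>i\<in>supp. v i \<noteq> 0) \<longrightarrow> sub_dot supp v (sub_mv G supp v) > 0"
    and DM: "(\<lambda>k. let S = supp; d = (\<lambda>i. - sub_mv (Hm k) S (\<lambda>j. grad (x k) $ j) i)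
                 in sub_norm S (\<lambda>i. sub_fmv (sub_inv (Hm k) S) S d i - sub_mv G S d i) / sub_norm S d)
             \<longlonglongrightarrow> 0"
  shows "(\<lambda>k. norm (x (Suc k) - xs) / norm (x k - xs)) \<longlonglongrightarrow> 0"
proof -
  obtain lm where lm: "lm > 0" "\<And>v. vec_restrict supp v = v \<Longrightarrow> lm * (norm v)^2 \<le> (norm (A *v v))^2"
    using sub_posdef_lower_bound [OF pd] by blast
  have "eventually (\<lambda>k. (let S = supp; d = (\<lambda>i. - sub_mv (Hm k) S (\<lambda>j. grad (x k) $ j) i)
                 in sub_norm S (\<lambda>i. sub_fmv (sub_inv (Hm k) S) S d i - sub_mv G S d i) / sub_norm S d)
             = dennis_more k) sequentially"
    using eventually_ge_at_top [of k0] by eventually_elim (rule dennis_more_eq)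
  with DM have dm: "dennis_more \<longlonglongrightarrow> 0"
    by (rule Lim_transform_eventually)
  have small: "eventually (\<lambda>k. dennis_more k < lm / 2) sequentially"
    using lm(1) by (intro order_tendstoD(2) [OF dm]) simp
  have "eventually (\<lambda>k. norm (norm (x (Suc k) - xs) / norm (x k - xs)) \<le> 8 / lm * dennis_more k)
      sequentially"
    using eventually_ge_at_top [of k0] small
  proof eventually_elim
    case (elim k)
    have step: "norm (x (Suc k) - xs) \<le> 8 / lm * dennis_more k * norm (x k - xs)"
      using superlinear_step [OF lm elim(1)] elim(2) by simp
    have "0 \<le> 8 / lm * dennis_more k"
      using lm(1) dennis_more_nonneg [of k] by simp
    \<comment> \<open>if x k = xs the quotient is 0 by the convention for division by zero\<close>
    then show ?case
      using step by (cases "norm (x k - xs) = 0") (simp_all add: divide_le_eq)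
  qed
  moreover have "(\<lambda>k. 8 / lm * dennis_more k) \<longlonglongrightarrow> 0"
    using tendsto_mult_left [OF dm, of "8 / lm"] by simp
  ultimately show ?thesis
    by (rule Lim_null_comparison)
qed

end

theorem theorem2:
  fixes A :: "real^'n^'m" and b :: "real^'m"
    and L lam mu :: real
    and x y :: "nat \<Rightarrow> real^'n"
    and Hm :: "nat \<Rightarrow> real^'n^'n"
    and alpha :: "nat \<Rightarrow> real"
    and xs :: "real^'n" and k0 :: nat
  assumes L_pos: "L > 0"
    and L_lip: "\<forall>u v. norm (lsq_grad A b u - lsq_grad A b v) \<le> L * norm (u - v)"
    and lam_pos: "lam > 0"
    and mu_pos: "mu > 0"
    and x_step: "\<forall>k. \<forall>z. lam * l0norm (x k)
                  + L/2 * (norm (x k - y k + (1/L) *\<^sub>R lsq_grad A b (y k)))^2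
                  + mu/2 * (norm (x k - y k))^2
               \<le> lam * l0norm z
                  + L/2 * (norm (z - y k + (1/L) *\<^sub>R lsq_grad A b (y k)))^2
                  + mu/2 * (norm (z - y k))^2"
    and H_spd: "\<forall>k. sym_posdef (Hm k)"
    and H_block: "\<forall>k. block_diag (Hm k) (- zero_idx (x k))"
    and alpha_def: "\<forall>k. let S = - zero_idx (x k);
                          g = (\<lambda>j. lsq_grad A b (x k) $ j);
                          d = (\<lambda>i. - sub_mv (Hm k) S g i);
                          Qd = sub_mv (transpose A ** A) S d
                      in alpha k = (if (\<forall>i\<in>S. Qd i = 0) then 0
                                    else - sub_dot S g d / sub_dot S d Qd)"
    and y_step: "\<forall>k. y (Suc k) = closest_point (coord_sub (zero_idx (x k)))
                         (x k - alpha k *\<^sub>R (Hm k *v lsq_grad A b (x k)))"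
    and cluster: "\<exists>r. strict_mono r \<and> (x \<circ> r) \<longlonglongrightarrow> xs"
    and k0_supp: "\<forall>k\<ge>k0. zero_idx (y k) = zero_idx (x k) \<and> zero_idx (x k) = zero_idx xs"
    and alpha_pos: "\<forall>k\<ge>k0. alpha k > 0"
  shows "(\<forall>k\<ge>k0. bnorm2 (transpose A ** A) (x (Suc k) - xs) \<le> bnorm2 (transpose A ** A) (x k - xs))
       \<and> (\<forall>k\<ge>k0. bnorm2 (transpose A ** A) (y (Suc k) - xs) \<le> bnorm2 (transpose A ** A) (y k - xs))
       \<and> (\<lambda>k. bnorm2 (transpose A ** A) (x k - xs)) \<longlonglongrightarrow> 0
       \<and> (\<lambda>k. bnorm2 (transpose A ** A) (y k - xs)) \<longlonglongrightarrow> 0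
       \<and> (\<forall>k\<ge>k0. bnorm2 (transpose A ** A) (y k - xs) = 0 \<longrightarrow> local_minimizer (Hobj A b lam) (y k))
       \<and> ((\<exists>m M. 0 < m \<and> m \<le> M \<and> (\<forall>k v. m * (norm v)^2 \<le> v \<bullet> (Hm k *v v)
                                            \<and> v \<bullet> (Hm k *v v) \<le> M * (norm v)^2))
          \<longrightarrow> (\<exists>c. 0 \<le> c \<and> c < 1 \<and> (\<forall>k\<ge>k0. bnorm2 (transpose A ** A) (x (Suc k) - xs)
                                         \<le> c * bnorm2 (transpose A ** A) (x k - xs))))
       \<and> (((\<exists>m M. 0 < m \<and> m \<le> M \<and> (\<forall>k v. m * (norm v)^2 \<le> v \<bullet> (Hm k *v v)
                                            \<and> v \<bullet> (Hm k *v v) \<le> M * (norm v)^2))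
           \<and> (\<forall>v. (\<exists>i\<in>- zero_idx xs. v i \<noteq> 0) \<longrightarrow>
                    sub_dot (- zero_idx xs) v (sub_mv (transpose A ** A) (- zero_idx xs) v) > 0)
           \<and> (\<lambda>k. let S = - zero_idx xs;
                      d = (\<lambda>i. - sub_mv (Hm k) S (\<lambda>j. lsq_grad A b (x k) $ j) i)
                  in sub_norm S (\<lambda>i. sub_fmv (sub_inv (Hm k) S) S d i
                                     - sub_mv (transpose A ** A) S d i) / sub_norm S d)
                \<longlonglongrightarrow> 0)
          \<longrightarrow> (\<lambda>k. norm (x (Suc k) - xs) / norm (x k - xs)) \<longlonglongrightarrow> 0)"
proof -
  interpret vmepiht_tail A b L lam mu x y Hm alpha xs k0
    using assms by unfold_locales
  \<comment> \<open>part (3) does not need the bounds m, M on Hm k\<close>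
  show ?thesis
    using err_x_antimono err_y_antimono err_x_tendsto err_y_tendsto y_local_minimizer
      linear_rate superlinear by blast
qed

end
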